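(* Let $\alpha>0$, let $G$ be a standard normal random variable and let $G_\alpha:=\operatorname{sgn}(G)|G|^{2/\alpha}$. Then the differential entropy of $G_\alpha$ is $$h(G_\alpha)=\Big(\frac{1}{2}-\frac{1}{\alpha}\Big)(\gamma+\ln 2)+\ln\frac{2\sqrt{2\pi}}{\alpha}+\frac{1}{2},$$ where $\gamma$ is the Euler–Mascheroni constant.
   Context: For a random variable with density $f$, the differential entropy is $h=-\int_{-\infty}^{\infty} f(x)\ln f(x)\,dx$. $\operatorname{sgn}$ denotes the signum function. *)

theory Defs
  imports "HOL-Analysis.Analysis" "HOL-Probability.Probability"
begin

definition diff_entropy :: "(real \<Rightarrow> real) \<Rightarrow> real" where
  "diff_entropy f = - (\<integral>x. f x * ln (f x) \<partial>lborel)"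

end

theory Submission
  imports Defs
begin

(* Put p = 2 / alpha and T x = sgn x * |x| powr p, so that G_alpha = T G.  T is a C^1 bijection
   of the punctured line with T' x = p |x| powr (p - 1), hence the density d of G_alpha satisfies
   d (T x) = phi x / (p |x| powr (p - 1)) and
     h(G_alpha) = - E ln d (T G) = h(G) + ln p + (p - 1) E ln |G|,
   where h(G) = ln (sqrt (2 pi)) + 1/2.  The substitution t = x^2/2 turns E ln |G| into the
   derivative of the Gamma integral at 1/2, which gives
     E ln |G| = (Digamma (1/2) + ln 2) / 2 = - (euler_mascheroni + ln 2) / 2. *)

lemma Gamma_integral_real':
  assumes "x > (0::real)"
  shows "((\<lambda>t. t powr (x - 1) / exp t) has_integral Gamma x) {0<..}"
  using Gamma_integral_real[OF assms]
  by (rule has_integral_spike_set_eq[THEN iffD1, rotated 2]) (rule negligible_subset[of "{0}"]; auto)+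

lemma powr_diff_quotient_mono:
  assumes "(t::real) > 0" "0 < h'" "h' \<le> h"
  shows "(t powr h' - 1) / h' \<le> (t powr h - 1) / h"
proof -
  define r where "r = h' / h"
  have r: "0 \<le> r" "r \<le> 1" "h' = r * h"
    using assms by (auto simp: r_def)
  have "(t powr h) powr r * 1 powr (1 - r) \<le> r * t powr h + (1 - r) * 1"
    by (rule Youngs_inequality_0) (use r assms in auto)
  then have "t powr h' - 1 \<le> r * (t powr h - 1)"
    using r by (simp add: powr_powr algebra_simps)
  then show ?thesis
    using assms by (simp add: r_def field_simps)
qed

lemma powr_diff_quotient_tendsto:
  assumes "(t::real) > 0"
  shows "((\<lambda>h. (t powr h - 1) / h) \<longlongrightarrow> ln t) (at 0)"
proof -
  have "((\<lambda>h. exp (h * ln t)) has_field_derivative ln t) (at 0)"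
    by (auto intro!: derivative_eq_intros)
  then show ?thesis
    using assms by (simp add: DERIV_def powr_def)
qed

lemma inverse_Suc_tendsto_at_0: "filterlim (\<lambda>k. 1 / real (Suc k)) (at 0) sequentially"
  by (rule filterlim_atI) (use LIMSEQ_Suc[OF lim_1_over_n] in auto)

lemma Gamma_diff_quotient_integral:
  assumes "s > (0::real)" "h > 0"
  shows "((\<lambda>t. t powr (s - 1) / exp t * ((t powr h - 1) / h)) has_integral (Gamma (s + h) - Gamma s) / h) {0<..}"
    and "(\<lambda>t. t powr (s - 1) / exp t * ((t powr h - 1) / h)) absolutely_integrable_on {0<..}"
proof -
  have eq: "t powr (s - 1) / exp t * ((t powr h - 1) / h)
            = (t powr (s + h - 1) / exp t - t powr (s - 1) / exp t) / h" if "t \<in> {0<..}" for t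
    using that assms by (simp add: powr_add[symmetric] field_simps)
  have "((\<lambda>t. (t powr (s + h - 1) / exp t - t powr (s - 1) / exp t) / h) has_integral (Gamma (s + h) - Gamma s) / h) {0<..}"
    using assms by (intro has_integral_divide has_integral_diff Gamma_integral_real') auto
  then show "((\<lambda>t. t powr (s - 1) / exp t * ((t powr h - 1) / h)) has_integral (Gamma (s + h) - Gamma s) / h) {0<..}"
    by (simp only: has_integral_cong[OF eq])
  have "(\<lambda>t. (t powr (s + h - 1) / exp t - t powr (s - 1) / exp t) / h) absolutely_integrable_on {0<..}"
    using Gamma_integral_real'[of "s + h"] Gamma_integral_real'[of s] assms
    by (intro set_integrable_divide set_integral_diff(1) nonnegative_absolutely_integrable_1) auto
  then show "(\<lambda>t. t powr (s - 1) / exp t * ((t powr h - 1) / h)) absolutely_integrable_on {0<..}"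
    by (simp only: set_integrable_cong[OF refl refl eq])
qed

(* Differentiation under the integral sign: the difference quotients (t powr h - 1) / h decrease
   to ln t as h decreases to 0, so monotone convergence applies. *)
lemma Gamma_ln_integral:
  assumes s: "s > (0::real)"
  shows "((\<lambda>t. t powr (s - 1) * ln t / exp t) has_integral Gamma s * Digamma s) {0<..}"
    and "(\<lambda>t. t powr (s - 1) * ln t / exp t) absolutely_integrable_on {0<..}"
proof -
  define h :: "nat \<Rightarrow> real" where "h k = 1 / real (Suc k)" for k
  define q where "q k t = t powr (s - 1) / exp t * ((t powr h k - 1) / h k)" for k t
  define g where "g t = t powr (s - 1) * ln t / exp t" for t :: real
  have h_pos: "h k > 0" for k
    by (simp add: h_def)
  note q_integral = Gamma_diff_quotient_integral[OF s h_pos, folded q_def]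
  have q_mono: "q (Suc k) t \<le> q k t" if "t \<in> {0<..}" for k t
    using that unfolding q_def
    by (intro mult_left_mono powr_diff_quotient_mono) (auto simp: h_def field_simps)
  have q_tendsto: "(\<lambda>k. q k t) \<longlonglongrightarrow> g t" if "t \<in> {0<..}" for t
  proof -
    have "(\<lambda>k. (t powr h k - 1) / h k) \<longlonglongrightarrow> ln t"
      using filterlim_compose[OF powr_diff_quotient_tendsto inverse_Suc_tendsto_at_0] that
      by (simp add: h_def o_def)
    from tendsto_mult_left[OF this, of "t powr (s - 1) / exp t"] show ?thesis
      by (simp add: q_def g_def)
  qed
  have "(Gamma has_field_derivative Gamma s * Digamma s) (at s)"
    by (rule has_field_derivative_Gamma) (use s nonpos_Ints_nonpos in auto)
  then have "((\<lambda>d. (Gamma (s + d) - Gamma s) / d) \<longlongrightarrow> Gamma s * Digamma s) (at 0)"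
    by (simp add: DERIV_def)
  from filterlim_compose[OF this inverse_Suc_tendsto_at_0]
  have integral_q_tendsto: "(\<lambda>k. integral {0<..} (q k)) \<longlonglongrightarrow> Gamma s * Digamma s"
    using integral_unique[OF q_integral(1)] by (simp add: h_def o_def)
  have "g integrable_on {0<..} \<and> (\<lambda>k. integral {0<..} (q k)) \<longlonglongrightarrow> integral {0<..} g"
  proof (rule monotone_convergence_decreasing)
    show "bounded (range (\<lambda>k. integral {0<..} (q k)))"
      using integral_q_tendsto by (intro convergent_imp_bounded) (auto simp: convergent_def)
  qed (use q_integral q_mono q_tendsto in auto)
  then have g_integrable: "g integrable_on {0<..}" and "integral {0<..} g = Gamma s * Digamma s"
    using integral_q_tendsto LIMSEQ_unique by auto
  then show "(g has_integral Gamma s * Digamma s) {0<..}"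
    by (simp add: has_integral_integral)
  have "g t \<le> q 0 t" if "t \<in> {0<..}" for t
    using decseq_ge[OF _ q_tendsto[OF that]] q_mono[OF that] by (simp add: decseq_Suc_iff)
  with g_integrable q_integral(2) show "g absolutely_integrable_on {0<..}"
    by (rule absolutely_integrable_absolutely_integrable_ubound)
qed

lemma absolutely_integrable_on_integral_cong:
  assumes "\<And>x. x \<in> S \<Longrightarrow> f x = g x"
  shows "f absolutely_integrable_on S \<and> integral S f = b \<longleftrightarrow> g absolutely_integrable_on S \<and> integral S g = b"
proof -
  have "f absolutely_integrable_on S \<longleftrightarrow> g absolutely_integrable_on S"
    by (rule set_integrable_cong) (use assms in auto)
  moreover have "integral S f = integral S g"
    by (rule integral_cong) (rule assms)
  ultimately show ?thesis
    by simp
qed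

lemma integrable_lborel_iff_absolutely_integrable_on:
  fixes f :: "'a::euclidean_space \<Rightarrow> 'b::euclidean_space"
  assumes "f \<in> borel_measurable borel" "negligible (- S)"
  shows "integrable lborel f \<longleftrightarrow> f absolutely_integrable_on S"
proof -
  have "f absolutely_integrable_on S \<longleftrightarrow> f absolutely_integrable_on UNIV"
    using assms(2) by (intro absolutely_integrable_spike_set_eq) (auto intro: negligible_subset)
  also have "\<dots> \<longleftrightarrow> integrable lborel f"
    using assms(1) integrable_completion[of f lborel] by (simp add: set_integrable_def)
  finally show ?thesis ..
qed

lemma integral_lborel_eq_integral_on:
  fixes f :: "'a::euclidean_space \<Rightarrow> 'b::euclidean_space"
  assumes "integrable lborel f" "negligible (- S)"
  shows "integral\<^sup>L lborel f = integral S f"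
proof -
  have "integral S f = integral UNIV f"
    using assms(2) by (intro integral_spike_set) (auto intro: negligible_subset)
  then show ?thesis
    using integral_lborel[OF assms(1)] by simp
qed

lemma lborel_integral_even:
  fixes f :: "real \<Rightarrow> real"
  assumes [measurable]: "f \<in> borel_measurable borel"
    and even: "\<And>x. f (- x) = f x"
    and pos: "f absolutely_integrable_on {0<..}"
  shows "integrable lborel f" "integral\<^sup>L lborel f = 2 * integral {0<..} f"
proof -
  have neg: "f absolutely_integrable_on {..<0} \<and> integral {..<0} f = integral {0<..} f"
    using has_absolute_integral_reflect_real[of "{..<0}" "{0<..}" f] pos even by auto
  have nonzero: "- {0} = {..<0} \<union> {(0::real)<..}"
    by auto
  have "(f has_integral integral {0<..} f) {..<0}" "(f has_integral integral {0<..} f) {0<..}"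
    using neg pos by (metis absolutely_integrable_on_def integrable_integral)+
  moreover have "{..<0} \<inter> {0<..} = ({} :: real set)"
    by auto
  ultimately have "(f has_integral 2 * integral {0<..} f) (- {0})"
    unfolding nonzero by (metis has_integral_Un mult_2 negligible_empty)
  then have "integral (- {0}) f = 2 * integral {0<..} f"
    by (rule integral_unique)
  moreover have "f absolutely_integrable_on - {0}"
    unfolding nonzero using neg pos by (intro absolutely_integrable_Un) auto
  ultimately show "integrable lborel f" "integral\<^sup>L lborel f = 2 * integral {0<..} f"
    using integrable_lborel_iff_absolutely_integrable_on[of f "- {0}"]
      integral_lborel_eq_integral_on[of f "- {0}"] by auto
qed

lemma has_absolute_integral_half_square_substitution:
  fixes f :: "real \<Rightarrow> real"
  shows "(\<lambda>x. x * f (x\<^sup>2 / 2)) absolutely_integrable_on {0<..} \<and> integral {0<..} (\<lambda>x. x * f (x\<^sup>2 / 2)) = b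
         \<longleftrightarrow> f absolutely_integrable_on {0<..} \<and> integral {0<..} f = b"
proof -
  have image: "(\<lambda>x. x\<^sup>2 / 2) ` {0<..} = {(0::real)<..}"
  proof (intro equalityI subsetI)
    fix t :: real
    assume "t \<in> {0<..}"
    then show "t \<in> (\<lambda>x. x\<^sup>2 / 2) ` {0<..}"
      by (intro image_eqI[of _ _ "sqrt (2 * t)"]) auto
  qed auto
  have "inj_on (\<lambda>x. x\<^sup>2 / 2) {(0::real)<..}"
    by (auto simp: inj_on_def power2_eq_iff)
  then have "(\<lambda>x. \<bar>x\<bar> * f (x\<^sup>2 / 2)) absolutely_integrable_on {0<..} \<and> integral {0<..} (\<lambda>x. \<bar>x\<bar> * f (x\<^sup>2 / 2)) = b
             \<longleftrightarrow> f absolutely_integrable_on (\<lambda>x. x\<^sup>2 / 2) ` {0<..} \<and> integral ((\<lambda>x. x\<^sup>2 / 2) ` {0<..}) f = b"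
    by (intro has_absolute_integral_change_of_variables_1') (auto intro!: derivative_eq_intros)
  moreover have "\<bar>x\<bar> * f (x\<^sup>2 / 2) = x * f (x\<^sup>2 / 2)" if "x \<in> {0<..}" for x
    using that by simp
  then have "(\<lambda>x. \<bar>x\<bar> * f (x\<^sup>2 / 2)) absolutely_integrable_on {0<..} \<and> integral {0<..} (\<lambda>x. \<bar>x\<bar> * f (x\<^sup>2 / 2)) = b
             \<longleftrightarrow> (\<lambda>x. x * f (x\<^sup>2 / 2)) absolutely_integrable_on {0<..} \<and> integral {0<..} (\<lambda>x. x * f (x\<^sup>2 / 2)) = b"
    by (rule absolutely_integrable_on_integral_cong)
  ultimately show ?thesis
    unfolding image by argo
qed

lemma Gamma_one_half_ln_integral:
  "((\<lambda>t::real. t powr (-1/2) * ln t / exp t + ln 2 * (t powr (-1/2) / exp t))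
      has_integral - sqrt pi * (euler_mascheroni + ln 2)) {0<..}"
  "(\<lambda>t::real. t powr (-1/2) * ln t / exp t + ln 2 * (t powr (-1/2) / exp t)) absolutely_integrable_on {0<..}"
proof -
  have Gamma_half: "((\<lambda>t. t powr (-1/2) / exp t) has_integral sqrt pi) {0<..}"
    "(\<lambda>t::real. t powr (-1/2) / exp t) absolutely_integrable_on {0<..}"
    using Gamma_integral_real'[of "1/2"]
    by (auto simp: Gamma_one_half_real intro!: nonnegative_absolutely_integrable_1)
  have Gamma_ln_half: "((\<lambda>t. t powr (-1/2) * ln t / exp t) has_integral sqrt pi * (- euler_mascheroni - 2 * ln 2)) {0<..}"
    "(\<lambda>t::real. t powr (-1/2) * ln t / exp t) absolutely_integrable_on {0<..}"
    using Gamma_ln_integral[of "1/2"] by (simp_all add: Gamma_one_half_real Digamma_one_half)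
  have "((\<lambda>t. t powr (-1/2) * ln t / exp t + ln 2 * (t powr (-1/2) / exp t))
          has_integral sqrt pi * (- euler_mascheroni - 2 * ln 2) + ln 2 * sqrt pi) {0<..}"
    by (intro has_integral_add has_integral_mult_right Gamma_half Gamma_ln_half)
  then show "((\<lambda>t::real. t powr (-1/2) * ln t / exp t + ln 2 * (t powr (-1/2) / exp t))
               has_integral - sqrt pi * (euler_mascheroni + ln 2)) {0<..}"
    by (simp add: algebra_simps)
  show "(\<lambda>t::real. t powr (-1/2) * ln t / exp t + ln 2 * (t powr (-1/2) / exp t)) absolutely_integrable_on {0<..}"
    using Gamma_half(2) Gamma_ln_half(2) by (intro set_integral_add(1) set_integrable_mult_right)
qed

lemma std_normal_density_ln_abs_on_pos:
  "(\<lambda>x. std_normal_density x * ln \<bar>x\<bar>) absolutely_integrable_on {0<..} \<and>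
   integral {0<..} (\<lambda>x. std_normal_density x * ln \<bar>x\<bar>) = - (euler_mascheroni + ln 2) / 4"
proof -
  define F where "F t = (t powr (-1/2) * ln t / exp t + ln 2 * (t powr (-1/2) / exp t)) / (4 * sqrt pi)"
    for t :: real
  have "(F has_integral - sqrt pi * (euler_mascheroni + ln 2) / (4 * sqrt pi)) {0<..}"
    unfolding F_def by (intro has_integral_divide Gamma_one_half_ln_integral)
  moreover have "- sqrt pi * (euler_mascheroni + ln 2) / (4 * sqrt pi) = - (euler_mascheroni + ln 2) / 4"
    by (simp add: field_simps)
  moreover have "F absolutely_integrable_on {0<..}"
    unfolding F_def by (intro set_integrable_divide Gamma_one_half_ln_integral)
  ultimately have "F absolutely_integrable_on {0<..} \<and> integral {0<..} F = - (euler_mascheroni + ln 2) / 4"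
    by (auto dest: integral_unique)
  then have substituted: "(\<lambda>x. x * F (x\<^sup>2 / 2)) absolutely_integrable_on {0<..} \<and>
                          integral {0<..} (\<lambda>x. x * F (x\<^sup>2 / 2)) = - (euler_mascheroni + ln 2) / 4"
    by (simp only: has_absolute_integral_half_square_substitution)
  have "x * F (x\<^sup>2 / 2) = std_normal_density x * ln \<bar>x\<bar>" if "x \<in> {0<..}" for x
  proof -
    have x: "x > 0" "\<bar>x\<bar> = x"
      using that by auto
    have "x * F (x\<^sup>2 / 2)
          = (x * (x\<^sup>2 / 2) powr (-1/2)) * (ln (x\<^sup>2 / 2) + ln 2) / (4 * sqrt pi * exp (x\<^sup>2 / 2))"
      unfolding F_def by (simp add: field_simps)
    also have "x * (x\<^sup>2 / 2) powr (-1/2) = sqrt 2"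
      using x by (simp add: powr_minus powr_half_sqrt real_sqrt_divide)
    also have "ln (x\<^sup>2 / 2) + ln 2 = 2 * ln \<bar>x\<bar>"
      using x by (simp add: ln_div ln_realpow)
    also have "sqrt 2 * (2 * ln \<bar>x\<bar>) / (4 * sqrt pi * exp (x\<^sup>2 / 2)) = std_normal_density x * ln \<bar>x\<bar>"
      by (simp add: std_normal_density_def exp_minus real_sqrt_mult field_simps)
    finally show ?thesis .
  qed
  with substituted show ?thesis
    by (subst (asm) absolutely_integrable_on_integral_cong) auto
qed

lemma integral_std_normal_density_ln_abs:
  "integrable lborel (\<lambda>x. std_normal_density x * ln \<bar>x\<bar>)"
  "integral\<^sup>L lborel (\<lambda>x. std_normal_density x * ln \<bar>x\<bar>) = - (euler_mascheroni + ln 2) / 2"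
proof -
  have "std_normal_density (- x) = std_normal_density x" for x
    by (simp add: std_normal_density_def)
  then show "integrable lborel (\<lambda>x. std_normal_density x * ln \<bar>x\<bar>)"
    "integral\<^sup>L lborel (\<lambda>x. std_normal_density x * ln \<bar>x\<bar>) = - (euler_mascheroni + ln 2) / 2"
    using lborel_integral_even[of "\<lambda>x. std_normal_density x * ln \<bar>x\<bar>"] std_normal_density_ln_abs_on_pos
    by auto
qed

lemma diff_entropy_std_normal_density:
  "integrable lborel (\<lambda>x. std_normal_density x * ln (std_normal_density x))"
  "diff_entropy std_normal_density = ln (sqrt (2 * pi)) + 1 / 2"
proof -
  have eq: "std_normal_density x * ln (std_normal_density x)
            = - ln (sqrt (2 * pi)) * (std_normal_density x * x ^ 0) - (std_normal_density x * x ^ 2) / 2" for x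
    by (simp add: std_normal_density_def ln_mult ln_div field_simps)
  show "integrable lborel (\<lambda>x. std_normal_density x * ln (std_normal_density x))"
    unfolding eq using integrable_std_normal_moment by simp
  show "diff_entropy std_normal_density = ln (sqrt (2 * pi)) + 1 / 2"
    unfolding diff_entropy_def eq
    using integrable_std_normal_moment integral_std_normal_moment_even[of 0] integral_std_normal_moment_even[of 1]
    by simp
qed

definition signed_powr :: "real \<Rightarrow> real \<Rightarrow> real" where
  "signed_powr p x = sgn x * \<bar>x\<bar> powr p"

lemma borel_measurable_signed_powr [measurable]: "signed_powr p \<in> borel_measurable borel"
  unfolding signed_powr_def by measurable

lemma abs_signed_powr [simp]: "\<bar>signed_powr p x\<bar> = \<bar>x\<bar> powr p"
  by (auto simp: signed_powr_def abs_mult sgn_if)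

lemma sgn_signed_powr [simp]: "sgn (signed_powr p x) = sgn x"
  by (auto simp: signed_powr_def sgn_mult sgn_if)

lemma signed_powr_eq_0_iff [simp]: "signed_powr p x = 0 \<longleftrightarrow> x = 0"
  by (auto simp: signed_powr_def sgn_if)

lemma signed_powr_1 [simp]: "signed_powr 1 x = x"
  by (simp add: signed_powr_def sgn_mult_abs)

lemma signed_powr_signed_powr: "signed_powr q (signed_powr p x) = signed_powr (p * q) x"
  by (simp add: signed_powr_def [of q] powr_powr) (simp add: signed_powr_def)

lemma bij_betw_signed_powr:
  assumes "p \<noteq> 0"
  shows "bij_betw (signed_powr p) (- {0}) (- {0})"
  by (rule bij_betwI[of _ _ _ "signed_powr (1 / p)"]) (use assms in \<open>auto simp: signed_powr_signed_powr\<close>)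

lemma has_field_derivative_signed_powr:
  assumes "x \<noteq> 0"
  shows "(signed_powr p has_field_derivative p * \<bar>x\<bar> powr (p - 1)) (at x)"
proof (cases "x > 0")
  case True
  have "((\<lambda>y. y powr p) has_field_derivative p * \<bar>x\<bar> powr (p - 1)) (at x)"
    using has_real_derivative_powr[OF True] True by simp
  then show ?thesis
    by (rule has_field_derivative_transform_within_open[of _ _ _ "{0<..}"])
       (use True in \<open>auto simp: signed_powr_def\<close>)
next
  case False
  with assms have "x < 0"
    by simp
  have "((\<lambda>y. - ((- y) powr p)) has_field_derivative p * \<bar>x\<bar> powr (p - 1)) (at x)"
    using \<open>x < 0\<close> by (auto intro!: derivative_eq_intros)
  then show ?thesis
    by (rule has_field_derivative_transform_within_open[of _ _ _ "{..<0}"])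
       (use \<open>x < 0\<close> in \<open>auto simp: signed_powr_def\<close>)
qed

lemma has_absolute_integral_signed_powr_substitution:
  assumes "p > 0"
  shows "(\<lambda>x. p * \<bar>x\<bar> powr (p - 1) * f (signed_powr p x)) absolutely_integrable_on - {0} \<and>
           integral (- {0}) (\<lambda>x. p * \<bar>x\<bar> powr (p - 1) * f (signed_powr p x)) = b
         \<longleftrightarrow> f absolutely_integrable_on - {0} \<and> integral (- {0}) f = b"
proof -
  have "inj_on (signed_powr p) (- {0})" and image: "signed_powr p ` (- {0}) = - {0}"
    using bij_betw_signed_powr[of p] assms by (simp_all add: bij_betw_def)
  then have "(\<lambda>x. \<bar>p * \<bar>x\<bar> powr (p - 1)\<bar> * f (signed_powr p x)) absolutely_integrable_on - {0} \<and>
               integral (- {0}) (\<lambda>x. \<bar>p * \<bar>x\<bar> powr (p - 1)\<bar> * f (signed_powr p x)) = b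
             \<longleftrightarrow> f absolutely_integrable_on signed_powr p ` (- {0}) \<and> integral (signed_powr p ` (- {0})) f = b"
    by (intro has_absolute_integral_change_of_variables_1')
       (auto intro: has_field_derivative_at_within has_field_derivative_signed_powr)
  then show ?thesis
    using assms unfolding image by (simp add: abs_mult)
qed

(* The density of signed_powr p X when X has density g.  Its value at 0 (where 0 powr a = 0)
   is arbitrary, which is harmless since {0} is a null set. *)
definition signed_powr_density :: "real \<Rightarrow> (real \<Rightarrow> real) \<Rightarrow> real \<Rightarrow> real" where
  "signed_powr_density p g y = \<bar>y\<bar> powr (1 / p - 1) / p * g (signed_powr (1 / p) y)"

lemma borel_measurable_signed_powr_density [measurable]:
  assumes [measurable]: "g \<in> borel_measurable borel"
  shows "signed_powr_density p g \<in> borel_measurable borel"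
  unfolding signed_powr_density_def by measurable

lemma signed_powr_density_nonneg:
  "p > 0 \<Longrightarrow> (\<And>x. 0 \<le> g x) \<Longrightarrow> 0 \<le> signed_powr_density p g y"
  by (simp add: signed_powr_density_def)

lemma signed_powr_density_signed_powr:
  assumes "p > 0" "x \<noteq> 0"
  shows "p * \<bar>x\<bar> powr (p - 1) * signed_powr_density p g (signed_powr p x) = g x"
proof -
  have "\<bar>x\<bar> powr (p - 1) * (\<bar>x\<bar> powr p) powr (1 / p - 1) = \<bar>x\<bar> powr 0"
    using assms by (simp add: powr_powr powr_add[symmetric] field_simps)
  then show ?thesis
    using assms by (simp add: signed_powr_density_def signed_powr_signed_powr)
qed

lemma integral_signed_powr_density:
  assumes p: "p > 0"
    and [measurable]: "g \<in> borel_measurable borel" "H \<in> borel_measurable borel"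
    and integrable: "integrable lborel (\<lambda>x. g x * H (signed_powr p x))"
  shows "integrable lborel (\<lambda>y. signed_powr_density p g y * H y)"
    and "integral\<^sup>L lborel (\<lambda>y. signed_powr_density p g y * H y)
         = integral\<^sup>L lborel (\<lambda>x. g x * H (signed_powr p x))"
proof -
  define F where "F y = signed_powr_density p g y * H y" for y
  have [measurable]: "F \<in> borel_measurable borel"
    unfolding F_def[abs_def] by measurable
  define b where "b = integral\<^sup>L lborel (\<lambda>x. g x * H (signed_powr p x))"
  have conegligible: "negligible (- (- {0 :: real}))"
    by simp
  have "(\<lambda>x. g x * H (signed_powr p x)) absolutely_integrable_on - {0}"
    using integrable by (subst integrable_lborel_iff_absolutely_integrable_on[OF _ conegligible, symmetric]) auto
  then have "(\<lambda>x. g x * H (signed_powr p x)) absolutely_integrable_on - {0} \<and>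
             integral (- {0}) (\<lambda>x. g x * H (signed_powr p x)) = b"
    using integral_lborel_eq_integral_on[OF integrable conegligible] by (simp add: b_def)
  moreover have "p * \<bar>x\<bar> powr (p - 1) * F (signed_powr p x) = g x * H (signed_powr p x)" if "x \<in> - {0}" for x
    using signed_powr_density_signed_powr[OF p, of x g] that by (simp add: F_def mult.assoc[symmetric])
  then have "(\<lambda>x. p * \<bar>x\<bar> powr (p - 1) * F (signed_powr p x)) absolutely_integrable_on - {0} \<and>
               integral (- {0}) (\<lambda>x. p * \<bar>x\<bar> powr (p - 1) * F (signed_powr p x)) = b
             \<longleftrightarrow> (\<lambda>x. g x * H (signed_powr p x)) absolutely_integrable_on - {0} \<and>
                 integral (- {0}) (\<lambda>x. g x * H (signed_powr p x)) = b"
    by (rule absolutely_integrable_on_integral_cong)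
  ultimately have F_on_nonzero: "F absolutely_integrable_on - {0} \<and> integral (- {0}) F = b"
    using has_absolute_integral_signed_powr_substitution[OF p, of F b] by blast
  then have F_integrable: "integrable lborel F"
    by (subst integrable_lborel_iff_absolutely_integrable_on[OF _ conegligible]) auto
  then show "integrable lborel (\<lambda>y. signed_powr_density p g y * H y)"
    by (simp add: F_def[abs_def])
  show "integral\<^sup>L lborel (\<lambda>y. signed_powr_density p g y * H y) = integral\<^sup>L lborel (\<lambda>x. g x * H (signed_powr p x))"
    using integral_lborel_eq_integral_on[OF F_integrable conegligible] F_on_nonzero by (simp add: F_def[abs_def] b_def)
qed

lemma distr_signed_powr_density:
  assumes "p > 0"
    and [measurable]: "g \<in> borel_measurable borel"
    and nonneg: "\<And>x. 0 \<le> g x" and integrable: "integrable lborel g"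
  shows "distr (density lborel (\<lambda>x. ennreal (g x))) lborel (signed_powr p)
         = density lborel (\<lambda>y. ennreal (signed_powr_density p g y))"
proof (rule measure_eqI)
  fix A
  assume "A \<in> sets (distr (density lborel (\<lambda>x. ennreal (g x))) lborel (signed_powr p))"
  then have A_borel [measurable]: "A \<in> sets borel"
    by simp
  have "signed_powr p -` A \<in> sets lborel"
    using measurable_sets_borel[OF borel_measurable_signed_powr A_borel] by simp
  then have "integrable lborel (\<lambda>x. g x * indicator (signed_powr p -` A) x)"
    using integrable by (rule integrable_real_mult_indicator)
  then have integrable_A: "integrable lborel (\<lambda>x. g x * indicator A (signed_powr p x))"
    by (simp add: indicator_def)
  have "emeasure (distr (density lborel (\<lambda>x. ennreal (g x))) lborel (signed_powr p)) A
        = (\<integral>\<^sup>+ x. ennreal (g x * indicator A (signed_powr p x)) \<partial>lborel)"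
    using measurable_sets_borel[OF borel_measurable_signed_powr A_borel]
    by (subst emeasure_distr) (auto simp: emeasure_density intro!: nn_integral_cong split: split_indicator)
  also have "\<dots> = ennreal (\<integral>x. g x * indicator A (signed_powr p x) \<partial>lborel)"
    using integrable_A nonneg by (intro nn_integral_eq_integral) auto
  also have "\<dots> = ennreal (\<integral>y. signed_powr_density p g y * indicator A y \<partial>lborel)"
    using integral_signed_powr_density(2)[OF assms(1,2) _ integrable_A] by simp
  also have "\<dots> = (\<integral>\<^sup>+ y. ennreal (signed_powr_density p g y * indicator A y) \<partial>lborel)"
    using integral_signed_powr_density(1)[OF assms(1,2) _ integrable_A] signed_powr_density_nonneg[OF assms(1) nonneg]
    by (intro nn_integral_eq_integral[symmetric]) auto
  also have "\<dots> = emeasure (density lborel (\<lambda>y. ennreal (signed_powr_density p g y))) A"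
    by (subst emeasure_density) (auto intro!: nn_integral_cong split: split_indicator)
  finally show "emeasure (distr (density lborel (\<lambda>x. ennreal (g x))) lborel (signed_powr p)) A
                = emeasure (density lborel (\<lambda>y. ennreal (signed_powr_density p g y))) A" .
qed simp

lemma distributed_signed_powr:
  assumes "p > 0"
    and distributed: "distributed M lborel X (\<lambda>x. ennreal (g x))"
    and "\<And>x. 0 \<le> g x" "integrable lborel g"
  shows "distributed M lborel (\<lambda>\<omega>. signed_powr p (X \<omega>)) (\<lambda>y. ennreal (signed_powr_density p g y))"
proof -
  have [measurable]: "X \<in> borel_measurable M" "g \<in> borel_measurable borel"
    using distributed_measurable[OF distributed] distributed_real_measurable[OF _ distributed] assms(3)
    by auto
  have "distr M lborel (\<lambda>\<omega>. signed_powr p (X \<omega>)) = distr (distr M lborel X) lborel (signed_powr p)"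
    by (subst distr_distr) (auto simp: comp_def)
  also have "\<dots> = density lborel (\<lambda>y. ennreal (signed_powr_density p g y))"
    unfolding distributed_distr_eq_density[OF distributed] using assms by (intro distr_signed_powr_density) auto
  finally show ?thesis
    by (auto simp: distributed_def)
qed

lemma diff_entropy_signed_powr_density:
  assumes p: "p > 0"
    and [measurable]: "g \<in> borel_measurable borel"
    and nonneg: "\<And>x. 0 \<le> g x" and "integrable lborel g" "integral\<^sup>L lborel g = 1"
    and "integrable lborel (\<lambda>x. g x * ln (g x))" "integrable lborel (\<lambda>x. g x * ln \<bar>x\<bar>)"
  defines "d \<equiv> signed_powr_density p g"
  shows "integrable lborel (\<lambda>y. d y * ln (d y))"
    and "diff_entropy d = diff_entropy g + ln p + (p - 1) * (\<integral>x. g x * ln \<bar>x\<bar> \<partial>lborel)"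
proof -
  define K where "K x = g x * ln (g x) - ln p * g x - (p - 1) * (g x * ln \<bar>x\<bar>)" for x
  have K: "g x * ln (d (signed_powr p x)) = K x" if "x \<noteq> 0" for x
  proof (cases "g x = 0")
    case False
    have "\<bar>x\<bar> powr (p - 1) > 0"
      using that by simp
    then have "d (signed_powr p x) = g x / (p * \<bar>x\<bar> powr (p - 1))"
      using signed_powr_density_signed_powr[OF p that, of g] p by (simp add: d_def field_simps)
    then show ?thesis
      using False nonneg[of x] p that by (simp add: K_def ln_div ln_mult ln_powr algebra_simps)
  qed (simp add: K_def)
  have K_integrable: "integrable lborel K"
    unfolding K_def using assms by simp
  have K_integral: "integral\<^sup>L lborel K
      = (\<integral>x. g x * ln (g x) \<partial>lborel) - ln p - (p - 1) * (\<integral>x. g x * ln \<bar>x\<bar> \<partial>lborel)"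
    unfolding K_def using assms by simp
  have "AE x in lborel. g x * ln (d (signed_powr p x)) = K x"
    using AE_lborel_singleton[of 0] by eventually_elim (use K in auto)
  then have "integrable lborel (\<lambda>x. g x * ln (d (signed_powr p x)))"
    and "(\<integral>x. g x * ln (d (signed_powr p x)) \<partial>lborel) = integral\<^sup>L lborel K"
    using K_integrable by (auto simp: d_def intro: integrable_cong_AE_imp integral_cong_AE)
  with integral_signed_powr_density[OF p, of g "\<lambda>y. ln (d y)"]
  show "integrable lborel (\<lambda>y. d y * ln (d y))"
    and "diff_entropy d = diff_entropy g + ln p + (p - 1) * (\<integral>x. g x * ln \<bar>x\<bar> \<partial>lborel)"
    using K_integral by (auto simp: d_def diff_entropy_def)
qed

lemma diff_entropy_cong_AE:
  assumes "AE x in lborel. f x = g x"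
    and [measurable]: "f \<in> borel_measurable borel" "g \<in> borel_measurable borel"
    and "integrable lborel (\<lambda>x. g x * ln (g x))"
  shows "integrable lborel (\<lambda>x. f x * ln (f x))" "diff_entropy f = diff_entropy g"
proof -
  have "AE x in lborel. f x * ln (f x) = g x * ln (g x)"
    using assms(1) by eventually_elim simp
  then show "integrable lborel (\<lambda>x. f x * ln (f x))" "diff_entropy f = diff_entropy g"
    using assms(4) unfolding diff_entropy_def
    by (auto intro: integrable_cong_AE_imp integral_cong_AE)
qed


lemma diff_entropy_signed_powr_std_normal_density:
  assumes p: "p > 0"
  defines "d \<equiv> signed_powr_density p std_normal_density"
  shows "integrable lborel (\<lambda>y. d y * ln (d y))"
    and "diff_entropy d = ln (sqrt (2 * pi)) + 1 / 2 + ln p - (p - 1) * (euler_mascheroni + ln 2) / 2"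
proof -
  have std_normal: "std_normal_density \<in> borel_measurable borel" "\<And>x. 0 \<le> std_normal_density x"
    "integrable lborel std_normal_density" "integral\<^sup>L lborel std_normal_density = 1"
    using integrable_std_normal_moment[of 0] integral_std_normal_moment_even[of 0] by simp_all
  note entropy_d = diff_entropy_signed_powr_density[OF p std_normal
      diff_entropy_std_normal_density(1) integral_std_normal_density_ln_abs(1), folded d_def]
  show "integrable lborel (\<lambda>y. d y * ln (d y))"
    by (rule entropy_d(1))
  show "diff_entropy d = ln (sqrt (2 * pi)) + 1 / 2 + ln p - (p - 1) * (euler_mascheroni + ln 2) / 2"
    unfolding entropy_d(2) diff_entropy_std_normal_density(2) integral_std_normal_density_ln_abs(2)
    by (simp add: field_simps)
qed

theorem mainTheorem3:
  fixes M :: "'a measure" and G :: "'a \<Rightarrow> real" and f :: "real \<Rightarrow> real" and \<alpha> :: real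
  assumes "prob_space M"
    and "\<alpha> > 0"
    and "distributed M lborel G (\<lambda>x. ennreal (std_normal_density x))"
    and "\<And>x. 0 \<le> f x"
    and "distributed M lborel (\<lambda>\<omega>. sgn (G \<omega>) * \<bar>G \<omega>\<bar> powr (2 / \<alpha>)) (\<lambda>x. ennreal (f x))"
  shows "integrable lborel (\<lambda>x. f x * ln (f x)) \<and>
         diff_entropy f = (1/2 - 1/\<alpha>) * (euler_mascheroni + ln 2) + ln (2 * sqrt (2 * pi) / \<alpha>) + 1/2"
proof -
  interpret prob_space M
    by (rule assms(1))
  define p where "p = 2 / \<alpha>"
  define d where "d = signed_powr_density p std_normal_density"
  have p: "p > 0"
    using assms(2) by (simp add: p_def)
  have "distributed M lborel (\<lambda>\<omega>. sgn (G \<omega>) * \<bar>G \<omega>\<bar> powr (2 / \<alpha>)) (\<lambda>y. ennreal (d y))"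
    using distributed_signed_powr[OF p assms(3)] integrable_std_normal_moment[of 0]
    by (simp add: d_def signed_powr_def p_def)
  from distributed_unique[OF assms(5) this] have "AE x in lborel. f x = d x"
    by eventually_elim (use assms(4) signed_powr_density_nonneg[OF p] in \<open>simp add: d_def\<close>)
  moreover have "f \<in> borel_measurable borel"
    using distributed_real_measurable[OF _ assms(5)] assms(4) by simp
  moreover have "d \<in> borel_measurable borel"
    unfolding d_def by measurable
  moreover note entropy_d = diff_entropy_signed_powr_std_normal_density[OF p, folded d_def]
  ultimately have "integrable lborel (\<lambda>x. f x * ln (f x))" "diff_entropy f = diff_entropy d"
    using diff_entropy_cong_AE[of f d] by blast+
  moreover have "diff_entropy d = (1/2 - 1/\<alpha>) * (euler_mascheroni + ln 2) + ln (2 * sqrt (2 * pi) / \<alpha>) + 1/2"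
    unfolding entropy_d(2) using assms(2) by (simp add: p_def ln_div ln_mult field_simps)
  ultimately show ?thesis
    by simp
qed

end
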